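(* Let $q>0$, let $S\subset\mathbb{H}^3$ be a sphere of hyperbolic radius $q$ centred at $p\in\mathbb{H}^3$, let $n\geq2$ and let $u_1,\dots,u_n\in T_p\mathbb{H}^3$ be unit vectors. Let $p_i$ be the intersection point of $S$ with $\mathrm{geod}(p,u_i)(\mathbb R_+)$. For each $i$ let $S_i\subset\mathbb{H}^3$ be the sphere of hyperbolic radius $q$ such that $S\cap S_i=\{p_i\}$, and let $\theta_{ij}$ be the angle between $u_i$ and $u_j$. If for all $i\neq j$ $$\theta_{ij}>2\arcsin\left(\frac{1}{2\cosh q}\right),$$ then $S_i\cap S_j=\emptyset$ for all $i\neq j$.
   Context: For $p\in\mathbb{H}^3$ and a unit vector $v\in T_p\mathbb{H}^3$, $\mathrm{geod}(p,v)$ denotes the unit-speed geodesic through $p$ with initial velocity $v$. *)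

theory Defs
  imports "HOL-Analysis.Analysis"
begin

text \<open>Hyperboloid model of hyperbolic 3-space inside Minkowski space R x R^3.\<close>

type_synonym mpoint = "real \<times> (real^3)"

definition mink :: "mpoint \<Rightarrow> mpoint \<Rightarrow> real" where
  "mink x y = - fst x * fst y + snd x \<bullet> snd y"

definition H3 :: "mpoint set" where
  "H3 = {x. mink x x = -1 \<and> fst x > 0}"

definition hdist :: "mpoint \<Rightarrow> mpoint \<Rightarrow> real" where
  "hdist x y = arcosh (- mink x y)"

definition tangent :: "mpoint \<Rightarrow> mpoint set" where
  "tangent p = {v. mink p v = 0}"

definition unit_tangent :: "mpoint \<Rightarrow> mpoint \<Rightarrow> bool" where
  "unit_tangent p v \<longleftrightarrow> v \<in> tangent p \<and> mink v v = 1"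

definition geod :: "mpoint \<Rightarrow> mpoint \<Rightarrow> real \<Rightarrow> mpoint" where
  "geod p v t = cosh t *\<^sub>R p + sinh t *\<^sub>R v"

text \<open>Angle between two unit tangent vectors (Riemannian metric = Minkowski form on T_p).\<close>
definition tangent_angle :: "mpoint \<Rightarrow> mpoint \<Rightarrow> real" where
  "tangent_angle u v = arccos (mink u v)"

definition hsphere :: "mpoint \<Rightarrow> real \<Rightarrow> mpoint set" where
  "hsphere c r = {x \<in> H3. hdist c x = r}"

end

theory Submission
  imports Defs
begin

text \<open>
  The sphere of radius \<open>q\<close> touching \<open>S\<close> from outside at \<open>geod p u q\<close> is centred at
  \<open>geod p u (2q)\<close>. By the hyperbolic law of cosines, the centres of two such spheres
  for directions at angle \<open>\<theta>\<close> satisfy \<open>cosh d = cosh\<^sup>2 2q - sinh\<^sup>2 2q cos \<theta>\<close>, and the angle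
  bound is exactly what makes \<open>d > 2q\<close>; two spheres of radius \<open>q\<close> whose centres are
  further than \<open>2q\<close> apart are disjoint.
\<close>

lemma mink_commute: "mink x y = mink y x"
  by (simp add: mink_def inner_commute mult.commute)

lemma mink_add_left [simp]: "mink (x + y) z = mink x z + mink y z"
  by (simp add: mink_def inner_add_left algebra_simps)

lemma mink_add_right [simp]: "mink z (x + y) = mink z x + mink z y"
  by (simp add: mink_def inner_add_right algebra_simps)

lemma mink_diff_left [simp]: "mink (x - y) z = mink x z - mink y z"
  by (simp add: mink_def inner_diff_left algebra_simps)

lemma mink_diff_right [simp]: "mink z (x - y) = mink z x - mink z y"
  by (simp add: mink_def inner_diff_right algebra_simps)

lemma mink_scaleR_left [simp]: "mink (a *\<^sub>R x) z = a * mink x z"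
  by (simp add: mink_def algebra_simps)

lemma mink_scaleR_right [simp]: "mink z (a *\<^sub>R x) = a * mink z x"
  by (simp add: mink_def algebra_simps)

lemma mink_minus_left [simp]: "mink (- x) z = - mink x z"
  by (simp add: mink_def)

lemma mink_minus_right [simp]: "mink z (- x) = - mink z x"
  by (simp add: mink_def)

lemma mink_zero_right [simp]: "mink x 0 = 0"
  by (simp add: mink_def)

lemma mink_orthogonal_nonneg:
  assumes "mink x x = -1" and "mink x y = 0"
  shows "mink y y \<ge> 0"
proof -
  obtain x0 X where x: "x = (x0, X)" by (cases x)
  obtain y0 Y where y: "y = (y0, Y)" by (cases y)
  have x0: "x0\<^sup>2 = 1 + X \<bullet> X" using assms(1) by (simp add: x mink_def power2_eq_square)
  have "x0\<^sup>2 * y0\<^sup>2 = (X \<bullet> Y)\<^sup>2"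
    using assms(2) by (simp add: x y mink_def flip: power_mult_distrib)
  also have "\<dots> \<le> (X \<bullet> X) * (Y \<bullet> Y)" by (rule Cauchy_Schwarz_ineq)
  also have "\<dots> \<le> x0\<^sup>2 * (Y \<bullet> Y)" using x0 by (simp add: mult_right_mono)
  finally have "x0\<^sup>2 * y0\<^sup>2 \<le> x0\<^sup>2 * (Y \<bullet> Y)" .
  moreover have "x0\<^sup>2 > 0" using x0 inner_ge_zero[of X] by linarith
  ultimately have "y0\<^sup>2 \<le> Y \<bullet> Y" by simp
  then show ?thesis by (simp add: y mink_def power2_eq_square)
qed

lemma mink_reverse_Cauchy_Schwarz:
  assumes "mink x x = -1"
  shows "- mink w w \<le> (mink x w)\<^sup>2"
proof -
  let ?a = "mink x w"
  have "mink x (w + ?a *\<^sub>R x) = 0" using assms by simp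
  then have "mink (w + ?a *\<^sub>R x) (w + ?a *\<^sub>R x) \<ge> 0"
    by (rule mink_orthogonal_nonneg[OF assms])
  then show ?thesis using assms by (simp add: mink_commute[of x w] power2_eq_square algebra_simps)
qed

lemma H3_abs_inner_less:
  assumes "mink x x = -1" and "y \<in> H3"
  shows "\<bar>snd x \<bullet> snd y\<bar> < \<bar>fst x\<bar> * fst y"
proof -
  obtain x0 X where x: "x = (x0, X)" by (cases x)
  obtain y0 Y where y: "y = (y0, Y)" by (cases y)
  have x0: "x0\<^sup>2 = 1 + X \<bullet> X" using assms(1) by (simp add: x mink_def power2_eq_square)
  have y0: "y0\<^sup>2 = 1 + Y \<bullet> Y" "y0 > 0"
    using assms(2) by (auto simp add: y H3_def mink_def power2_eq_square)
  have "(X \<bullet> Y)\<^sup>2 \<le> (X \<bullet> X) * (Y \<bullet> Y)" by (rule Cauchy_Schwarz_ineq)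
  also have "\<dots> = x0\<^sup>2 * y0\<^sup>2 - x0\<^sup>2 - y0\<^sup>2 + 1" using x0 y0 by (simp add: algebra_simps)
  also have "\<dots> < x0\<^sup>2 * y0\<^sup>2" using x0 y0 inner_ge_zero[of X] inner_ge_zero[of Y] by linarith
  finally have "\<bar>X \<bullet> Y\<bar>\<^sup>2 < (\<bar>x0\<bar> * y0)\<^sup>2" by (simp add: power_mult_distrib)
  then have "\<bar>X \<bullet> Y\<bar> < \<bar>x0\<bar> * y0" by (rule power_less_imp_less_base) (use y0 in simp)
  then show ?thesis by (simp add: x y)
qed

lemma H3_mink_le:
  assumes "x \<in> H3" and "y \<in> H3"
  shows "mink x y \<le> -1"
proof -
  have x: "mink x x = -1" "fst x > 0" using assms(1) by (auto simp: H3_def)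
  have "mink x y < 0" using H3_abs_inner_less[OF x(1) assms(2)] x(2) assms(2)
    by (auto simp: mink_def H3_def abs_if split: if_splits)
  moreover have "(mink x y)\<^sup>2 \<ge> 1"
    using mink_reverse_Cauchy_Schwarz[OF x(1), of y] assms(2) by (simp add: H3_def)
  ultimately show ?thesis using abs_square_less_1[of "mink x y"] by linarith
qed

lemma H3_if_mink_neg:
  assumes "mink x x = -1" and "y \<in> H3" and "mink x y < 0"
  shows "x \<in> H3"
proof -
  have "fst x > 0"
  proof (rule ccontr)
    assume "\<not> fst x > 0"
    then have "- fst x * fst y \<ge> \<bar>snd x \<bullet> snd y\<bar>" using H3_abs_inner_less[OF assms(1,2)] by simp
    then show False using assms(3) by (simp add: mink_def)
  qed
  then show ?thesis using assms(1) by (simp add: H3_def)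
qed

lemma mink_eq_neg_cosh_hdist:
  assumes "x \<in> H3" and "y \<in> H3"
  shows "mink x y = - cosh (hdist x y)"
  using H3_mink_le[OF assms] by (simp add: hdist_def)

lemma hdist_eq_iff:
  assumes "x \<in> H3" and "y \<in> H3" and "r \<ge> 0"
  shows "hdist x y = r \<longleftrightarrow> mink x y = - cosh r"
  using mink_eq_neg_cosh_hdist[OF assms(1,2)] arcosh_cosh_real[OF assms(3)]
  by (auto simp: hdist_def)

lemma unit_tangent_abs_mink_le:
  assumes "p \<in> H3" and "unit_tangent p u" and "unit_tangent p v"
  shows "\<bar>mink u v\<bar> \<le> 1"
proof -
  have p: "mink p p = -1" using assms(1) by (simp add: H3_def)
  have uv: "mink p u = 0" "mink u u = 1" "mink p v = 0" "mink v v = 1"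
    using assms(2,3) by (auto simp: unit_tangent_def tangent_def)
  have "mink (u + v) (u + v) \<ge> 0" by (rule mink_orthogonal_nonneg[OF p]) (simp add: uv)
  moreover have "mink (u - v) (u - v) \<ge> 0" by (rule mink_orthogonal_nonneg[OF p]) (simp add: uv)
  ultimately show ?thesis using uv by (simp add: mink_commute[of v u])
qed

lemma mink_geod_geod:
  assumes "p \<in> H3" and "unit_tangent p u" and "unit_tangent p v"
  shows "mink (geod p u s) (geod p v t) = sinh s * sinh t * mink u v - cosh s * cosh t"
  using assms by (simp add: geod_def H3_def unit_tangent_def tangent_def mink_commute[of u p])

lemma mink_base_geod:
  assumes "p \<in> H3" and "unit_tangent p v"
  shows "mink p (geod p v t) = - cosh t"
  using assms by (simp add: geod_def H3_def unit_tangent_def tangent_def)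

lemma geod_in_H3:
  assumes "p \<in> H3" and "unit_tangent p v"
  shows "geod p v t \<in> H3"
proof (rule H3_if_mink_neg[OF _ assms(1)])
  show "mink (geod p v t) (geod p v t) = -1"
    using mink_geod_geod[OF assms assms(2)] assms(2) cosh_square_eq[of t]
    by (simp add: unit_tangent_def power2_eq_square)
  show "mink (geod p v t) p < 0"
    using mink_base_geod[OF assms] by (simp add: mink_commute[of p] cosh_real_pos)
qed

lemma geod_in_hsphere_iff:
  assumes "p \<in> H3" and "unit_tangent p v" and "t \<ge> 0" and "q \<ge> 0"
  shows "geod p v t \<in> hsphere p q \<longleftrightarrow> t = q"
  using hdist_eq_iff[OF assms(1) geod_in_H3[OF assms(1,2)] assms(4)] mink_base_geod[OF assms(1,2)]
    arcosh_cosh_real assms(3,4) geod_in_H3[OF assms(1,2)]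
  by (auto simp: hsphere_def)

text \<open>
  If \<open>u\<close> is the only unit tangent vector with a given product against \<open>w\<close>, then it is fixed
  by the reflection in the line of \<open>w\<close>, which preserves that product.
\<close>
lemma unique_unit_tangent_imp_parallel:
  assumes u: "unit_tangent p u" and w: "mink p w = 0" "mink w w > 0"
    and unique: "\<And>v. unit_tangent p v \<Longrightarrow> mink w v = mink w u \<Longrightarrow> v = u"
  shows "w = mink w u *\<^sub>R u"
proof -
  define a where "a = mink w u"
  define W where "W = mink w w"
  have pu: "mink p u = 0" "mink u u = 1" using u by (auto simp: unit_tangent_def tangent_def)
  have "(2 * a / W) *\<^sub>R w - u = u"
  proof (rule unique)
    show "unit_tangent p ((2 * a / W) *\<^sub>R w - u)"
      using pu w by (simp add: unit_tangent_def tangent_def a_def W_def mink_commute[of u w]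
          field_simps power2_eq_square)
    show "mink w ((2 * a / W) *\<^sub>R w - u) = mink w u"
      using w by (simp add: a_def W_def)
  qed
  then have "(2 * a / W) *\<^sub>R w = 2 *\<^sub>R u" by (simp add: scaleR_2 algebra_simps)
  then have "(1 / 2) *\<^sub>R ((2 * a / W) *\<^sub>R w) = (1 / 2) *\<^sub>R (2 *\<^sub>R u)" by (rule arg_cong)
  then have wu: "(a / W) *\<^sub>R w = u" by simp
  then have "a \<noteq> 0" using pu by auto
  then have w_eq: "w = (W / a) *\<^sub>R u" using w wu by (auto simp: W_def)
  have "mink w u = W / a" by (subst w_eq) (simp add: pu)
  then have "W / a = a" by (simp add: a_def)
  then show ?thesis using w_eq unfolding a_def[symmetric] by simp
qed

lemma geod_in_hsphere_iff_mink:
  assumes p: "p \<in> H3" and v: "unit_tangent p v" and c: "c \<in> H3" and q: "q \<ge> 0"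
  shows "geod p v q \<in> hsphere c q \<longleftrightarrow> sinh q * mink c v = cosh q * (- mink p c - 1)"
proof -
  have "mink c (geod p v q) = sinh q * mink c v + cosh q * mink p c"
    by (simp add: geod_def mink_commute[of c p])
  then show ?thesis
    using hdist_eq_iff[OF c geod_in_H3[OF p v] q] geod_in_H3[OF p v]
    by (auto simp: hsphere_def algebra_simps)
qed

lemma eq_cosh_sinh_double:
  fixes q D a :: real
  assumes q: "q > 0" and D: "D > 1" and a: "a\<^sup>2 = D\<^sup>2 - 1" and rel: "sinh q * a = cosh q * (D - 1)"
  shows "D = cosh (2 * q)" and "a = sinh (2 * q)"
proof -
  define k where "k = cosh q"
  define s where "s = sinh q"
  have s_pos: "s > 0" using q by (simp add: s_def)
  have ks: "k\<^sup>2 = s\<^sup>2 + 1" by (simp add: k_def s_def cosh_square_eq)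
  have a2: "a\<^sup>2 = (D - 1) * (D + 1)" using a by (simp add: power2_eq_square algebra_simps)
  have "(D - 1) * (s\<^sup>2 * (D + 1)) = (s * a)\<^sup>2" by (simp add: power_mult_distrib a2 ac_simps)
  also have "\<dots> = (D - 1) * (k\<^sup>2 * (D - 1))"
    unfolding s_def k_def rel by (simp add: power2_eq_square ac_simps)
  finally have "s\<^sup>2 * (D + 1) = k\<^sup>2 * (D - 1)" using D by simp
  then have D_eq: "D = k\<^sup>2 + s\<^sup>2" using ks by (simp add: algebra_simps)
  then show "D = cosh (2 * q)" by (simp add: k_def s_def cosh_double)
  have "s * a = s * (2 * k * s)" using rel D_eq ks by (simp add: k_def s_def algebra_simps power2_eq_square)
  then show "a = sinh (2 * q)" using s_pos by (simp add: k_def s_def sinh_double)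
qed

lemma tangent_hsphere_center:
  assumes q: "q > 0" and p: "p \<in> H3" and u: "unit_tangent p u" and c: "c \<in> H3"
    and touch: "hsphere p q \<inter> hsphere c q = {geod p u q}"
  shows "c = geod p u (2 * q)"
proof -
  define D where "D = - mink p c"
  define w where "w = c - D *\<^sub>R p"
  have pp: "mink p p = -1" and cc: "mink c c = -1" using p c by (simp_all add: H3_def)
  have pw: "mink p w = 0" using pp by (simp add: w_def D_def)
  have mink_w: "mink w v = mink c v" if "unit_tangent p v" for v
    using that by (simp add: w_def unit_tangent_def tangent_def)
  define a where "a = mink w u"
  have on_c_iff: "geod p v q \<in> hsphere c q \<longleftrightarrow> sinh q * mink w v = cosh q * (D - 1)"
    if v: "unit_tangent p v" for v
    using geod_in_hsphere_iff_mink[OF p v c] q mink_w[OF v] by (simp add: D_def)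
  have rel: "sinh q * a = cosh q * (D - 1)" using touch on_c_iff[OF u] by (auto simp: a_def)
  have unique: "v = u" if v: "unit_tangent p v" and "mink w v = a" for v
  proof -
    have "geod p v q \<in> hsphere p q \<inter> hsphere c q"
      using geod_in_hsphere_iff[OF p v] on_c_iff[OF v] rel q \<open>mink w v = a\<close> by simp
    then have "sinh q *\<^sub>R v = sinh q *\<^sub>R u" using touch by (simp add: geod_def)
    then show "v = u" using q by simp
  qed
  have "a \<noteq> 0"
  proof
    assume "a = 0"
    then have "- u = u" using u by (intro unique) (auto simp: a_def unit_tangent_def tangent_def)
    then have "2 *\<^sub>R u = 0" by (metis add.right_inverse scaleR_2)
    then show False using u by (simp add: unit_tangent_def)
  qed
  then have "D \<noteq> 1" using rel q by auto
  moreover have "D \<ge> 1" using H3_mink_le[OF p c] by (simp add: D_def)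
  ultimately have D_gt: "D > 1" by simp
  have ww: "mink w w = D\<^sup>2 - 1"
    using pp cc by (simp add: w_def D_def mink_commute[of c p] power2_eq_square)
  have w_eq: "w = a *\<^sub>R u"
    unfolding a_def
  proof (rule unique_unit_tangent_imp_parallel[OF u pw])
    show "mink w w > 0" using ww D_gt by (simp add: one_less_power)
  qed (use unique in \<open>simp add: a_def\<close>)
  have "a\<^sup>2 = D\<^sup>2 - 1" using ww u by (simp add: w_eq unit_tangent_def power2_eq_square)
  moreover have "c = D *\<^sub>R p + a *\<^sub>R u" by (simp add: w_def flip: w_eq)
  ultimately show ?thesis using eq_cosh_sinh_double[OF q D_gt _ rel] by (simp add: geod_def)
qed

lemma hsphere_Int_empty_if_far:
  assumes a: "a \<in> H3" and b: "b \<in> H3" and far: "cosh (2 * r) < - mink a b"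
  shows "hsphere a r \<inter> hsphere b r = {}"
proof (rule ccontr)
  assume "hsphere a r \<inter> hsphere b r \<noteq> {}"
  then obtain x where x: "x \<in> H3" "hdist a x = r" "hdist b x = r" by (auto simp: hsphere_def)
  have "- mink (a + b) (a + b) \<le> (mink x (a + b))\<^sup>2"
    by (rule mink_reverse_Cauchy_Schwarz) (use x in \<open>simp add: H3_def\<close>)
  moreover have "mink x (a + b) = - 2 * cosh r"
    using mink_eq_neg_cosh_hdist[OF a x(1)] mink_eq_neg_cosh_hdist[OF b x(1)] x
    by (simp add: mink_commute[of x])
  moreover have "mink (a + b) (a + b) = 2 * mink a b - 2"
    using a b by (simp add: H3_def mink_commute[of b a])
  ultimately have "- mink a b \<le> 2 * (cosh r)\<^sup>2 - 1" by (simp add: power2_eq_square)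
  then show False using far cosh_double_cosh[of r] by linarith
qed

lemma less_if_arccos_gt_double_arcsin:
  fixes m y :: real
  assumes m: "\<bar>m\<bar> \<le> 1" and y: "0 \<le> y" "y \<le> 1" and gt: "arccos m > 2 * arcsin y"
  shows "m < 1 - 2 * y\<^sup>2"
proof -
  have "cos (arccos m) < cos (2 * arcsin y)"
  proof (rule cos_monotone_0_pi)
    show "0 \<le> 2 * arcsin y" using arcsin_nonneg[of y] y by simp
    show "arccos m \<le> pi" using arccos_ubound[of m] m by simp
  qed (fact gt)
  then show ?thesis using m y by (simp add: cos_double_sin)
qed

lemma cosh_double_less:
  fixes q m :: real
  assumes q: "q > 0" and m: "m < 1 - 1 / (2 * (cosh q)\<^sup>2)"
  shows "cosh (2 * q) < (cosh (2 * q))\<^sup>2 - (sinh (2 * q))\<^sup>2 * m"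
proof -
  define k where "k = cosh q"
  have k2: "k\<^sup>2 > 1" using q cosh_square_eq[of q] by (simp add: k_def)
  have "k > 0" by (simp add: k_def)
  have "0 < 4 * k\<^sup>2 * (k\<^sup>2 - 1) * (1 - 1 / (2 * k\<^sup>2) - m)"
    using k2 m by (simp add: k_def)
  also have "\<dots> = (2 * k\<^sup>2 - 1)\<^sup>2 - 4 * k\<^sup>2 * (k\<^sup>2 - 1) * m - (2 * k\<^sup>2 - 1)"
    using \<open>k > 0\<close> by (simp add: field_simps power2_eq_square)
  also have "\<dots> = (cosh (2 * q))\<^sup>2 - (sinh (2 * q))\<^sup>2 * m - cosh (2 * q)"
  proof -
    have "cosh (2 * q) = 2 * k\<^sup>2 - 1" by (simp add: k_def cosh_double_cosh)
    moreover have "(sinh (2 * q))\<^sup>2 = 4 * k\<^sup>2 * (k\<^sup>2 - 1)"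
      by (simp add: k_def sinh_double power_mult_distrib sinh_square_eq)
    ultimately show ?thesis by simp
  qed
  finally show ?thesis by simp
qed

theorem lemma9:
  fixes q :: real and p :: mpoint and n :: nat
    and u :: "nat \<Rightarrow> mpoint" and pt :: "nat \<Rightarrow> mpoint" and c :: "nat \<Rightarrow> mpoint"
  assumes "q > 0" and "p \<in> H3" and "n \<ge> 2"
    and "\<And>i. i \<in> {1..n} \<Longrightarrow> unit_tangent p (u i)"
    and "\<And>i. i \<in> {1..n} \<Longrightarrow> pt i \<in> hsphere p q \<and> (\<exists>t\<ge>0. pt i = geod p (u i) t)"
    and "\<And>i. i \<in> {1..n} \<Longrightarrow> c i \<in> H3 \<and> hsphere p q \<inter> hsphere (c i) q = {pt i}"
    and "\<And>i j. i \<in> {1..n} \<Longrightarrow> j \<in> {1..n} \<Longrightarrow> i \<noteq> j \<Longrightarrow>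
           tangent_angle (u i) (u j) > 2 * arcsin (1 / (2 * cosh q))"
  shows "\<forall>i\<in>{1..n}. \<forall>j\<in>{1..n}. i \<noteq> j \<longrightarrow> hsphere (c i) q \<inter> hsphere (c j) q = {}"
proof (intro ballI impI)
  fix i j assume i: "i \<in> {1..n}" and j: "j \<in> {1..n}" and "i \<noteq> j"
  have center: "c l = geod p (u l) (2 * q)" if l: "l \<in> {1..n}" for l
  proof -
    have "pt l = geod p (u l) q"
      using assms(5)[OF l] geod_in_hsphere_iff[OF assms(2) assms(4)[OF l]] assms(1) by force
    then show ?thesis using tangent_hsphere_center[OF assms(1,2) assms(4)[OF l]] assms(6)[OF l] by simp
  qed
  define m where "m = mink (u i) (u j)"
  have "m < 1 - 2 * (1 / (2 * cosh q))\<^sup>2"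
  proof (rule less_if_arccos_gt_double_arcsin)
    show "\<bar>m\<bar> \<le> 1"
      unfolding m_def by (rule unit_tangent_abs_mink_le[OF assms(2) assms(4)[OF i] assms(4)[OF j]])
    show "1 / (2 * cosh q) \<le> 1" using cosh_real_ge_1[of q] by simp
    show "arccos m > 2 * arcsin (1 / (2 * cosh q))"
      using assms(7)[OF i j \<open>i \<noteq> j\<close>] by (simp add: m_def tangent_angle_def)
  qed simp
  then have "m < 1 - 1 / (2 * (cosh q)\<^sup>2)" by (simp add: power_divide)
  then have "cosh (2 * q) < (cosh (2 * q))\<^sup>2 - (sinh (2 * q))\<^sup>2 * m"
    by (rule cosh_double_less[OF assms(1)])
  also have "\<dots> = - mink (c i) (c j)"
    using mink_geod_geod[OF assms(2) assms(4)[OF i] assms(4)[OF j]]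
    by (simp add: center[OF i] center[OF j] m_def power2_eq_square)
  finally have "cosh (2 * q) < - mink (c i) (c j)" .
  then show "hsphere (c i) q \<inter> hsphere (c j) q = {}"
    using hsphere_Int_empty_if_far assms(6) i j by blast
qed

end
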